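(* Let $1\le p<\infty$ and $g\in H(\mathbb{D})$. Then the integral operator $I_g: S_2^p\to S_2^p$, $I_gf(z)=\int_0^z f'(w)g(w)\,dw$, is bounded if and only if $g\in S^p$.
   Context: $\mathbb{D}$ is the open unit disc, $H(\mathbb{D})$ the space of analytic functions on $\mathbb{D}$. For $1\le p<\infty$, $H^p$ is the Hardy space of $f\in H(\mathbb{D})$ with $\|f\|_{H^p}^p=\sup_{0<r<1}\frac{1}{2\pi}\int_0^{2\pi}|f(re^{i\theta})|^p\,d\theta<\infty$. $S^p=\{f\in H(\mathbb{D}): f'\in H^p\}$ with norm $\|f\|_{S^p}=|f(0)|+\|f'\|_{H^p}$. $S_2^p=\{f\in H(\mathbb{D}): f''\in H^p\}$ with norm $\|f\|_{S_2^p}=|f(0)|+|f'(0)|+\|f''\|_{H^p}$. *)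

theory Defs
  imports "HOL-Complex_Analysis.Complex_Analysis"
begin

definition hardy_mean :: "real \<Rightarrow> (complex \<Rightarrow> complex) \<Rightarrow> real \<Rightarrow> real" where
  "hardy_mean p f r = (1 / (2 * pi)) * integral {0..2*pi} (\<lambda>\<theta>. norm (f (of_real r * cis \<theta>)) powr p)"

definition hardy_space :: "real \<Rightarrow> (complex \<Rightarrow> complex) set" where
  "hardy_space p = {f. f holomorphic_on ball 0 1 \<and> bdd_above (hardy_mean p f ` {0<..<1})}"

definition hardy_norm :: "real \<Rightarrow> (complex \<Rightarrow> complex) \<Rightarrow> real" where
  "hardy_norm p f = (SUP r\<in>{0<..<1}. hardy_mean p f r) powr (1 / p)"

definition S_space :: "real \<Rightarrow> (complex \<Rightarrow> complex) set" where
  "S_space p = {f. f holomorphic_on ball 0 1 \<and> deriv f \<in> hardy_space p}"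

definition S2_space :: "real \<Rightarrow> (complex \<Rightarrow> complex) set" where
  "S2_space p = {f. f holomorphic_on ball 0 1 \<and> deriv (deriv f) \<in> hardy_space p}"

definition S2_norm :: "real \<Rightarrow> (complex \<Rightarrow> complex) \<Rightarrow> real" where
  "S2_norm p f = norm (f 0) + norm (deriv f 0) + hardy_norm p (deriv (deriv f))"

definition I_op :: "(complex \<Rightarrow> complex) \<Rightarrow> (complex \<Rightarrow> complex) \<Rightarrow> complex \<Rightarrow> complex" where
  "I_op g f z = contour_integral (linepath 0 z) (\<lambda>w. deriv f w * g w)"

definition I_op_bounded_S2 :: "real \<Rightarrow> (complex \<Rightarrow> complex) \<Rightarrow> bool" where
  "I_op_bounded_S2 p g \<longleftrightarrow> (\<exists>C. \<forall>f \<in> S2_space p.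
      I_op g f \<in> S2_space p \<and> S2_norm p (I_op g f) \<le> C * S2_norm p f)"

end

theory Submission
  imports Defs
begin

text \<open>Taking \<open>f(z) = z\<close> gives \<open>(I_g f)'' = g'\<close>, so boundedness forces \<open>g \<in> S^p\<close>.
  Conversely \<open>(I_g f)'' = f'' g + f' g'\<close> with \<open>g\<close> and \<open>f'\<close> both in \<open>S^p\<close>, so it suffices that
  every \<open>h \<in> S^p\<close> is bounded by \<open>|h(0)| + 4 pi \<parallel>h'\<parallel>_H^p\<close>. For \<open>|z| < r < 1\<close>,
  \<open>h(z) - h(0)\<close> is \<open>-1/(2 pi i)\<close> times the integral of
  \<open>h'(u) (Ln (1 - z/u) - Ln (1 - cnj z u / r\<^sup>2))\<close> over \<open>|u| = r\<close>: the first logarithm is handled by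
  integration by parts and Cauchy's formula, the second is holomorphic on a disc containing the
  circle. On the circle the kernel is purely imaginary of modulus at most \<open>2 pi\<close>, so \<open>|h(z) - h(0)|\<close>
  is bounded by the \<open>L^1\<close> mean of \<open>h'\<close>, which for \<open>p \<ge> 1\<close> is controlled by its \<open>H^p\<close> norm.\<close>

lemma continuous_on_circle_image:
  fixes F :: "complex \<Rightarrow> complex"
  assumes "F holomorphic_on ball 0 1" "0 \<le> r" "r < 1"
  shows "continuous_on S (\<lambda>t. F (of_real r * cis t))"
proof (rule continuous_on_compose2[of "ball 0 1" F])
  show "continuous_on (ball 0 1) F"
    using assms(1) holomorphic_on_imp_continuous_on by blast
  show "(\<lambda>t::real. complex_of_real r * cis t) ` S \<subseteq> ball 0 1"
    using assms by (auto simp: norm_mult)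
qed (intro continuous_intros)

lemma integrable_on_circle_norm_powr:
  fixes F :: "complex \<Rightarrow> complex"
  assumes "F holomorphic_on ball 0 1" "0 < p" "0 \<le> r" "r < 1"
  shows "(\<lambda>t. norm (F (of_real r * cis t)) powr p) integrable_on {0..2*pi}"
  by (rule integrable_continuous_interval, rule continuous_on_powr')
     (use assms in \<open>auto intro!: continuous_intros continuous_on_circle_image\<close>)

lemma hardy_mean_nonneg: "0 \<le> hardy_mean p F r"
proof -
  have "0 \<le> integral {0..2*pi} (\<lambda>\<theta>. norm (F (of_real r * cis \<theta>)) powr p)"
    by (cases "(\<lambda>\<theta>. norm (F (of_real r * cis \<theta>)) powr p) integrable_on {0..2*pi}")
       (auto intro: integral_nonneg simp: not_integrable_integral)
  then show ?thesis by (simp add: hardy_mean_def)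
qed

lemma hardy_mean_cong:
  assumes "\<And>z. z \<in> ball 0 1 \<Longrightarrow> F z = G z" "0 \<le> r" "r < 1"
  shows "hardy_mean p F r = hardy_mean p G r"
  unfolding hardy_mean_def using assms by (simp add: norm_mult)

lemma hardy_mean_le_hardy_norm_powr:
  assumes "0 < p" "F \<in> hardy_space p" "r \<in> {0<..<1}"
  shows "hardy_mean p F r \<le> hardy_norm p F powr p"
proof -
  have bdd: "bdd_above (hardy_mean p F ` {0<..<1})"
    using assms(2) by (simp add: hardy_space_def)
  have le_Sup: "hardy_mean p F r \<le> (SUP s\<in>{0<..<1}. hardy_mean p F s)"
    by (rule cSUP_upper[OF assms(3) bdd])
  moreover have "0 \<le> (SUP s\<in>{0<..<1}. hardy_mean p F s)"
    using hardy_mean_nonneg le_Sup by (rule order_trans)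
  ultimately show ?thesis
    using assms(1) by (simp add: hardy_norm_def powr_powr)
qed

lemma hardy_space_and_norm_le:
  assumes "F holomorphic_on ball 0 1" "0 < p" "0 \<le> M"
    and mean_le: "\<And>r. r \<in> {0<..<1} \<Longrightarrow> hardy_mean p F r \<le> M powr p"
  shows "F \<in> hardy_space p" and "hardy_norm p F \<le> M"
proof -
  have bdd: "bdd_above (hardy_mean p F ` {0<..<1})"
    using mean_le by (intro bdd_aboveI2[where M = "M powr p"]) auto
  then show "F \<in> hardy_space p"
    using assms(1) by (simp add: hardy_space_def)
  have "0 \<le> (SUP r\<in>{0<..<1}. hardy_mean p F r)"
    by (rule cSUP_upper2[OF bdd, of "1/2"]) (auto intro: hardy_mean_nonneg)
  moreover have "(SUP r\<in>{0<..<1}. hardy_mean p F r) \<le> M powr p"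
    using mean_le by (intro cSUP_least) auto
  ultimately have "hardy_norm p F \<le> (M powr p) powr (1 / p)"
    unfolding hardy_norm_def using assms(2) by (intro powr_mono2) auto
  then show "hardy_norm p F \<le> M"
    using assms(2,3) by (simp add: powr_powr)
qed

text \<open>With \<open>\<tau> = \<parallel>F\<parallel>\<^sub>H\<^sub>p\<close> this bounds the \<open>L\<^sup>1\<close> mean by the \<open>L\<^sup>p\<close> mean without Hoelder's inequality.\<close>
lemma le_add_scaled_powr:
  fixes x \<tau> p :: real
  assumes "0 \<le> x" "0 < \<tau>" "1 \<le> p"
  shows "x \<le> \<tau> + \<tau> powr (1 - p) * x powr p"
proof (cases "x \<le> \<tau>")
  case True
  then show ?thesis by (simp add: add_increasing2)
next
  case False
  then have "1 \<le> (x / \<tau>) powr (p - 1)"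
    using assms by (intro ge_one_powr_ge_zero) auto
  then have "x \<le> x * (x / \<tau>) powr (p - 1)"
    using False assms by simp
  also have "\<dots> = \<tau> powr (1 - p) * x powr p"
    using False assms
    by (simp add: powr_divide powr_diff powr_minus divide_simps powr_add[symmetric])
  finally show ?thesis
    using assms by (simp add: add_increasing)
qed

lemma circle_integral_norm_le_hardy_norm:
  assumes p: "1 \<le> p" and F: "F \<in> hardy_space p" and r: "0 < r" "r < 1"
  shows "integral {0..2*pi} (\<lambda>t. norm (F (of_real r * cis t))) \<le> 4 * pi * hardy_norm p F"
proof -
  let ?N = "hardy_norm p F"
  have holF: "F holomorphic_on ball 0 1"
    using F by (simp add: hardy_space_def)
  have int1: "(\<lambda>t. norm (F (of_real r * cis t))) integrable_on {0..2*pi}"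
    using r by (intro integrable_continuous_interval continuous_intros continuous_on_circle_image[OF holF]) auto
  have intp: "(\<lambda>t. norm (F (of_real r * cis t)) powr p) integrable_on {0..2*pi}"
    using p r by (intro integrable_on_circle_norm_powr[OF holF]) auto
  have le_tau: "integral {0..2*pi} (\<lambda>t. norm (F (of_real r * cis t))) \<le> 4 * pi * \<tau>"
    if "?N \<le> \<tau>" "0 < \<tau>" for \<tau>
  proof -
    have "integral {0..2*pi} (\<lambda>t. norm (F (of_real r * cis t)))
        \<le> integral {0..2*pi} (\<lambda>t. \<tau> + \<tau> powr (1 - p) * norm (F (of_real r * cis t)) powr p)"
      using that p intp
      by (intro integral_le int1 integrable_add le_add_scaled_powr integrable_on_mult_right) auto
    also have "\<dots> = 2 * pi * \<tau> + \<tau> powr (1 - p) * (2 * pi * hardy_mean p F r)"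
      by (subst integral_add) (auto simp: hardy_mean_def intro: integrable_on_mult_right[OF intp])
    also have "\<dots> \<le> 2 * pi * \<tau> + \<tau> powr (1 - p) * (2 * pi * \<tau> powr p)"
    proof -
      have "hardy_mean p F r \<le> ?N powr p"
        using p F r by (intro hardy_mean_le_hardy_norm_powr) auto
      also have "\<dots> \<le> \<tau> powr p"
        using that p by (intro powr_mono2) (auto simp: hardy_norm_def)
      finally show ?thesis by (intro add_left_mono mult_left_mono) auto
    qed
    also have "\<dots> = 4 * pi * \<tau>"
      using that by (simp add: powr_add[symmetric] algebra_simps)
    finally show ?thesis .
  qed
  show ?thesis
  proof (rule field_le_epsilon)
    fix e :: real
    assume "0 < e"
    then have "0 < ?N + e / (4 * pi)"
      by (simp add: hardy_norm_def add_nonneg_pos)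
    then show "integral {0..2*pi} (\<lambda>t. norm (F (of_real r * cis t))) \<le> 4 * pi * ?N + e"
      using le_tau[of "?N + e / (4 * pi)"] \<open>0 < e\<close> by (simp add: algebra_simps)
  qed
qed

lemma one_minus_notin_nonpos_Reals:
  fixes w :: complex
  assumes "norm w < 1"
  shows "1 - w \<notin> \<real>\<^sub>\<le>\<^sub>0"
proof -
  have "Re w < 1"
    using assms complex_Re_le_cmod[of w] by linarith
  then show ?thesis
    by (simp add: complex_nonpos_Reals_iff)
qed

lemma has_field_derivative_mult_Ln_one_minus_div:
  assumes holh: "h holomorphic_on ball 0 1" and u: "u \<in> ball 0 1" and zu: "norm z < norm u"
  shows "((\<lambda>u. h u * Ln (1 - z/u)) has_field_derivative
           deriv h u * Ln (1 - z/u) + h u * (1/(u - z) - 1/(u - 0))) (at u)"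
proof -
  have u0: "u \<noteq> 0" and uz: "u \<noteq> z"
    using zu norm_ge_zero[of z] by auto
  have "norm (z/u) < 1"
    using zu u0 by (simp add: norm_divide divide_less_eq)
  then have "((\<lambda>u. Ln (1 - z/u)) has_field_derivative inverse (1 - z/u) * (z/u^2)) (at u)"
    using u0 by (auto intro!: derivative_eq_intros one_minus_notin_nonpos_Reals
                      simp: power2_eq_square field_simps)
  from DERIV_mult[OF holomorphic_derivI[OF holh open_ball u] this]
  have "((\<lambda>u. h u * Ln (1 - z/u)) has_field_derivative
          deriv h u * Ln (1 - z/u) + h u * (inverse (1 - z/u) * (z/u^2))) (at u)"
    by (simp add: algebra_simps)
  moreover have "inverse (1 - z/u) * (z/u^2) = 1/(u - z) - 1/(u - 0)"
    using u0 uz by (simp add: field_simps power2_eq_square)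
  ultimately show ?thesis
    by (simp only:)
qed

lemma has_contour_integral_deriv_Ln_one_minus_div:
  assumes holh: "h holomorphic_on ball 0 1" and zr: "norm z < r" and r1: "r < 1"
  shows "((\<lambda>u. deriv h u * Ln (1 - z/u))
           has_contour_integral (- (2 * of_real pi * \<i>) * (h z - h 0))) (circlepath 0 r)"
proof -
  have r0: "r > 0"
    using zr norm_ge_zero[of z] by linarith
  define A where "A = {u. norm z < norm u} \<inter> ball (0::complex) 1"
  have "((\<lambda>u. h u * Ln (1 - z/u)) has_field_derivative
          deriv h u * Ln (1 - z/u) + h u * (1/(u - z) - 1/(u - 0))) (at u within A)"
    if "u \<in> A" for u
    by (rule has_field_derivative_at_within, rule has_field_derivative_mult_Ln_one_minus_div[OF holh])
       (use that in \<open>auto simp: A_def\<close>)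
  then have "((\<lambda>u. deriv h u * Ln (1 - z/u) + h u * (1/(u - z) - 1/(u - 0))) has_contour_integral 0)
          (circlepath 0 r)"
    by (rule Cauchy_theorem_primitive) (use r0 zr r1 in \<open>auto simp: A_def\<close>)
  moreover have "((\<lambda>u. h u * (1/(u - z) - 1/(u - 0))) has_contour_integral
                    (2 * of_real pi * \<i> * h z - 2 * of_real pi * \<i> * h 0)) (circlepath 0 r)"
  proof -
    have "h holomorphic_on cball 0 r"
      by (rule holomorphic_on_subset[OF holh]) (use r1 in auto)
    from has_contour_integral_diff[OF Cauchy_integral_circlepath_simple[OF this, of z]
                                     Cauchy_integral_circlepath_simple[OF this, of 0]]
    show ?thesis using zr r0 by (simp add: algebra_simps)
  qed
  ultimately have "((\<lambda>u. (deriv h u * Ln (1 - z/u) + h u * (1/(u - z) - 1/(u - 0)))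
                        - h u * (1/(u - z) - 1/(u - 0)))
                    has_contour_integral 0 - (2 * of_real pi * \<i> * h z - 2 * of_real pi * \<i> * h 0))
                  (circlepath 0 r)"
    by (rule has_contour_integral_diff)
  then show ?thesis
    by (simp add: algebra_simps)
qed

lemma has_contour_integral_deriv_Ln_reflected:
  assumes holh: "h holomorphic_on ball 0 1" and zr: "norm z < r" and r1: "r < 1"
  shows "((\<lambda>u. deriv h u * Ln (1 - cnj z * u / (of_real r)^2)) has_contour_integral 0) (circlepath 0 r)"
proof -
  have r0: "r > 0"
    using zr norm_ge_zero[of z] by linarith
  define \<rho> where "\<rho> = (if z = 0 then 1 else min 1 (r^2 / norm z))"
  have r_less: "r < \<rho>"
  proof (cases "z = 0")
    case False
    then have "r < r^2 / norm z"
      using zr r0 by (simp add: field_simps power2_eq_square)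
    then show ?thesis
      using False r1 by (simp add: \<rho>_def)
  qed (use r1 in \<open>simp add: \<rho>_def\<close>)
  have small: "norm (cnj z * u / (of_real r)^2) < 1" if "u \<in> ball 0 \<rho>" for u
  proof (cases "z = 0")
    case False
    then have "norm z * norm u < r^2"
      using that by (auto simp: \<rho>_def field_simps)
    then show ?thesis
      using r0 by (simp add: norm_divide norm_mult norm_power)
  qed simp
  have "deriv h holomorphic_on ball 0 \<rho>"
    by (rule holomorphic_on_subset[OF holomorphic_deriv[OF holh open_ball]]) (auto simp: \<rho>_def)
  then have "(\<lambda>u. deriv h u * Ln (1 - cnj z * u / (of_real r)^2)) holomorphic_on ball 0 \<rho>"
    using small by (auto intro!: holomorphic_intros one_minus_notin_nonpos_Reals)
  then show ?thesis
    by (rule Cauchy_theorem_convex_simple[OF _ convex_ball]) (use r0 r_less in auto)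
qed

lemma norm_Ln_reflection_diff_le:
  assumes nu: "norm u = r" and zr: "norm z < r"
  shows "norm (Ln (1 - z/u) - Ln (1 - cnj z * u / (of_real r)^2)) \<le> 2 * pi"
proof -
  have r0: "0 < r"
    using zr norm_ge_zero[of z] by linarith
  then have u0: "u \<noteq> 0"
    using nu by auto
  have not_nonpos: "1 - z/u \<notin> \<real>\<^sub>\<le>\<^sub>0"
    using zr nu u0 r0 by (intro one_minus_notin_nonpos_Reals) (simp add: norm_divide divide_less_eq)
  have "u * cnj u = (of_real r)^2"
    using complex_norm_square[of u] nu by simp
  then have "cnj u = (of_real r)^2 / u"
    using u0 by (simp add: eq_divide_eq mult.commute)
  then have "cnj (1 - z/u) = 1 - cnj z * u / (of_real r)^2"
    by (simp add: divide_divide_eq_right)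
  then have "Ln (1 - cnj z * u / (of_real r)^2) = cnj (Ln (1 - z/u))"
    using cnj_Ln[OF not_nonpos] by simp
  then have "Ln (1 - z/u) - Ln (1 - cnj z * u / (of_real r)^2) = of_real (2 * Im (Ln (1 - z/u))) * \<i>"
    by (simp add: complex_diff_cnj)
  moreover have "\<bar>Im (Ln (1 - z/u))\<bar> \<le> pi"
  proof -
    have "1 - z/u \<noteq> 0"
      using not_nonpos by auto
    then show ?thesis
      using mpi_less_Im_Ln[of "1 - z/u"] Im_Ln_le_pi[of "1 - z/u"] by linarith
  qed
  ultimately show ?thesis
    by (simp add: norm_mult)
qed

lemma norm_diff_le_circle_integral_deriv:
  assumes holh: "h holomorphic_on ball 0 1" and zr: "norm z < r" and r1: "r < 1"
  shows "norm (h z - h 0) \<le> r * integral {0..2*pi} (\<lambda>t. norm (deriv h (of_real r * cis t)))"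
proof -
  have r0: "r > 0"
    using zr norm_ge_zero[of z] by linarith
  define K where "K u = Ln (1 - z/u) - Ln (1 - cnj z * u / (of_real r)^2)" for u
  have "((\<lambda>u. deriv h u * K u) has_contour_integral (- (2 * of_real pi * \<i>) * (h z - h 0)))
          (circlepath 0 r)"
    using has_contour_integral_diff[OF has_contour_integral_deriv_Ln_one_minus_div[OF holh zr r1]
                                       has_contour_integral_deriv_Ln_reflected[OF holh zr r1]]
    by (simp add: K_def algebra_simps)
  then have has_int: "((\<lambda>t. deriv h (of_real r * cis t) * K (of_real r * cis t) * r * \<i> * cis t)
                        has_integral (- (2 * of_real pi * \<i>) * (h z - h 0))) {0..2*pi}"
    unfolding circlepath_def by (subst (asm) has_contour_integral_part_circlepath_iff) auto
  have integrable: "(\<lambda>t. 2 * pi * r * norm (deriv h (of_real r * cis t))) integrable_on {0..2*pi}"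
    using r0 r1 by (intro integrable_continuous_interval continuous_intros continuous_on_circle_image
                          holomorphic_deriv[OF holh open_ball]) auto
  have "norm (deriv h (of_real r * cis t) * K (of_real r * cis t) * r * \<i> * cis t)
          \<le> 2 * pi * r * norm (deriv h (of_real r * cis t))" for t
  proof -
    have "norm (K (of_real r * cis t)) \<le> 2 * pi"
      unfolding K_def using r0 zr by (intro norm_Ln_reflection_diff_le) (auto simp: norm_mult)
    from mult_right_mono[OF this norm_ge_zero[of "deriv h (of_real r * cis t)"]]
    show ?thesis
      using r0 by (simp add: norm_mult algebra_simps)
  qed
  from integral_norm_bound_integral[OF has_integral_integrable[OF has_int] integrable this]
  have "2 * pi * norm (h z - h 0) \<le> 2 * pi * (r * integral {0..2*pi} (\<lambda>t. norm (deriv h (of_real r * cis t))))"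
    by (simp add: integral_unique[OF has_int] norm_mult)
  then show ?thesis
    by simp
qed

lemma S_space_norm_le:
  assumes p: "1 \<le> p" and h: "h \<in> S_space p" and z: "z \<in> ball 0 1"
  shows "norm (h z) \<le> norm (h 0) + 4 * pi * hardy_norm p (deriv h)"
proof -
  define r where "r = (1 + norm z) / 2"
  have zr: "norm z < r" and r0: "0 < r" and r1: "r < 1"
    using z by (auto simp: r_def add_pos_nonneg)
  have holh: "h holomorphic_on ball 0 1" and dh: "deriv h \<in> hardy_space p"
    using h by (auto simp: S_space_def)
  have "0 \<le> integral {0..2*pi} (\<lambda>t. norm (deriv h (of_real r * cis t)))"
    using r0 r1 by (intro integral_nonneg integrable_continuous_interval continuous_intros
                          continuous_on_circle_image holomorphic_deriv[OF holh open_ball]) auto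
  then have "norm (h z - h 0) \<le> integral {0..2*pi} (\<lambda>t. norm (deriv h (of_real r * cis t)))"
    using norm_diff_le_circle_integral_deriv[OF holh zr r1] r1 mult_left_le_one_le[of _ r] r0
    by fastforce
  also have "\<dots> \<le> 4 * pi * hardy_norm p (deriv h)"
    by (rule circle_integral_norm_le_hardy_norm[OF p dh r0 r1])
  finally show ?thesis
    using norm_triangle_sub[of "h z" "h 0"] by linarith
qed

lemma I_op_has_field_derivative:
  assumes holf: "f holomorphic_on ball 0 1" and holg: "g holomorphic_on ball 0 1"
    and w: "w \<in> ball 0 1"
  shows "(I_op g f has_field_derivative deriv f w * g w) (at w)"
proof -
  define \<phi> where "\<phi> w = deriv f w * g w" for w
  have hol\<phi>: "\<phi> holomorphic_on ball 0 1"
    unfolding \<phi>_def by (intro holomorphic_intros holf holg) auto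
  have seg: "closed_segment 0 y \<subseteq> ball (0::complex) 1" if "y \<in> ball 0 1" for y
    using that by (simp add: closed_segment_subset convex_ball)
  have triangle: "contour_integral (linepath 0 b) \<phi> + contour_integral (linepath b c) \<phi> +
                  contour_integral (linepath c 0) \<phi> = 0"
    if "closed_segment b c \<subseteq> ball 0 1" for b c
  proof -
    have "convex hull {0, b, c} \<subseteq> ball 0 1"
      by (rule starlike_convex_subset[OF _ that seg]) auto
    then have "(\<phi> has_contour_integral 0) (linepath 0 b +++ linepath b c +++ linepath c 0)"
      by (intro Cauchy_theorem_triangle holomorphic_on_subset[OF hol\<phi>])
    then show ?thesis
      using has_chain_integral_chain_integral3 by blast
  qed
  have "((\<lambda>x. contour_integral (linepath 0 x) \<phi>) has_field_derivative \<phi> w) (at w)"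
    using holomorphic_on_imp_continuous_on[OF hol\<phi>]
    by (rule triangle_contour_integrals_starlike_primitive[OF _ _ open_ball w seg triangle]) auto
  then show ?thesis
    unfolding I_op_def \<phi>_def by simp
qed

lemma I_op_holomorphic_on:
  assumes "f holomorphic_on ball 0 1" "g holomorphic_on ball 0 1"
  shows "I_op g f holomorphic_on ball 0 1"
  using I_op_has_field_derivative[OF assms] by (auto simp: holomorphic_on_open) blast

lemma deriv_deriv_I_op:
  assumes holf: "f holomorphic_on ball 0 1" and holg: "g holomorphic_on ball 0 1"
    and w: "w \<in> ball 0 1"
  shows "deriv (deriv (I_op g f)) w = deriv (deriv f) w * g w + deriv f w * deriv g w"
proof -
  have holf': "deriv f holomorphic_on ball 0 1"
    by (rule holomorphic_deriv[OF holf open_ball])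
  have "((\<lambda>w. deriv f w * g w) has_field_derivative deriv (deriv f) w * g w + deriv f w * deriv g w) (at w)"
    using DERIV_mult[OF holomorphic_derivI[OF holf' open_ball w] holomorphic_derivI[OF holg open_ball w]]
    by (simp add: ac_simps)
  then have "(deriv (I_op g f) has_field_derivative deriv (deriv f) w * g w + deriv f w * deriv g w) (at w)"
    by (rule has_field_derivative_transform_within_open[OF _ open_ball w])
       (use I_op_has_field_derivative[OF holf holg] DERIV_imp_deriv in force)
  then show ?thesis
    by (rule DERIV_imp_deriv)
qed

lemma powr_add_le_two_powr:
  fixes a b p :: real
  assumes "0 \<le> a" "0 \<le> b" "0 < p"
  shows "(a + b) powr p \<le> 2 powr p * (a powr p + b powr p)"
proof -
  have "(a + b) powr p \<le> (2 * max a b) powr p"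
    using assms by (intro powr_mono2) auto
  also have "\<dots> = 2 powr p * max a b powr p"
    using assms by (simp add: powr_mult)
  also have "\<dots> \<le> 2 powr p * (a powr p + b powr p)"
    by (intro mult_left_mono) (auto simp: max_def)
  finally show ?thesis .
qed

lemma norm_add_mult_powr_le:
  fixes a b c d :: complex
  assumes c: "norm c \<le> G" and d: "norm d \<le> B" and p: "0 < p"
  shows "norm (a * c + d * b) powr p \<le> (2 * G) powr p * norm a powr p + (2 * B) powr p * norm b powr p"
proof -
  have G0: "0 \<le> G" and B0: "0 \<le> B"
    using c d norm_ge_zero order_trans by blast+
  have "norm (a * c + d * b) \<le> G * norm a + B * norm b"
    using norm_triangle_ineq[of "a * c" "d * b"]
          mult_right_mono[OF c norm_ge_zero[of a]] mult_right_mono[OF d norm_ge_zero[of b]]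
    by (simp add: norm_mult mult.commute)
  then have "norm (a * c + d * b) powr p \<le> (G * norm a + B * norm b) powr p"
    using p by (intro powr_mono2) auto
  also have "\<dots> \<le> 2 powr p * ((G * norm a) powr p + (B * norm b) powr p)"
    using G0 B0 p by (intro powr_add_le_two_powr) auto
  finally show ?thesis
    using G0 B0 by (simp add: powr_mult algebra_simps)
qed

lemma powr_add_powr_le_powr_add:
  fixes a b p :: real
  assumes a: "0 \<le> a" and b: "0 \<le> b" and p: "1 \<le> p"
  shows "a powr p + b powr p \<le> (a + b) powr p"
proof (cases "a + b = 0")
  case True
  then have "a = 0" "b = 0"
    using a b by linarith+
  then show ?thesis
    by simp
next
  case False
  then have s: "0 < a + b"
    using a b by linarith
  have le: "x powr p \<le> x" if "0 \<le> x" "x \<le> 1" for x :: real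
    using powr_mono'[of 1 p x] that p by simp
  have "a powr p + b powr p = (a + b) powr p * ((a / (a + b)) powr p + (b / (a + b)) powr p)"
    using a b s by (simp add: powr_divide field_simps)
  also have "\<dots> \<le> (a + b) powr p * (a / (a + b) + b / (a + b))"
    using a b s by (intro mult_left_mono add_mono le) auto
  also have "\<dots> = (a + b) powr p"
    using s by (simp add: add_divide_distrib[symmetric])
  finally show ?thesis .
qed

lemma hardy_mean_le_combination:
  assumes hu: "u holomorphic_on ball 0 1" and hv: "v holomorphic_on ball 0 1"
    and hw: "w holomorphic_on ball 0 1" and p: "0 < p"
    and pointwise: "\<And>z. z \<in> ball 0 1 \<Longrightarrow>
                      norm (u z) powr p \<le> a * norm (v z) powr p + b * norm (w z) powr p"
    and r: "0 \<le> r" "r < 1"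
  shows "hardy_mean p u r \<le> a * hardy_mean p v r + b * hardy_mean p w r"
proof -
  note iu = integrable_on_circle_norm_powr[OF hu p r]
    and iv = integrable_on_mult_right[OF integrable_on_circle_norm_powr[OF hv p r], of a]
    and iw = integrable_on_mult_right[OF integrable_on_circle_norm_powr[OF hw p r], of b]
  have "integral {0..2*pi} (\<lambda>t. norm (u (of_real r * cis t)) powr p)
      \<le> integral {0..2*pi} (\<lambda>t. a * norm (v (of_real r * cis t)) powr p + b * norm (w (of_real r * cis t)) powr p)"
    using r by (intro integral_le[OF iu integrable_add[OF iv iw]] pointwise) (auto simp: norm_mult)
  also have "\<dots> = a * integral {0..2*pi} (\<lambda>t. norm (v (of_real r * cis t)) powr p)
                 + b * integral {0..2*pi} (\<lambda>t. norm (w (of_real r * cis t)) powr p)"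
    by (simp add: integral_add[OF iv iw])
  finally show ?thesis
    unfolding hardy_mean_def by (simp add: field_simps)
qed

lemma hardy_space_cong:
  assumes "\<And>z. z \<in> ball 0 1 \<Longrightarrow> F z = G z"
  shows "F \<in> hardy_space p \<longleftrightarrow> G \<in> hardy_space p"
proof -
  have "hardy_mean p F ` {0<..<1} = hardy_mean p G ` {0<..<1}"
    using assms by (intro image_cong refl hardy_mean_cong) auto
  moreover have "F holomorphic_on ball 0 1 \<longleftrightarrow> G holomorphic_on ball 0 1"
    using assms by (intro holomorphic_cong) auto
  ultimately show ?thesis
    by (simp add: hardy_space_def)
qed

lemma hardy_norm_deriv_deriv_I_op_le:
  assumes p: "1 \<le> p" and g: "g \<in> S_space p" and f: "f \<in> S2_space p"
  defines "G \<equiv> norm (g 0) + 4 * pi * hardy_norm p (deriv g)"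
    and "B \<equiv> norm (deriv f 0) + 4 * pi * hardy_norm p (deriv (deriv f))"
  shows "deriv (deriv (I_op g f)) \<in> hardy_space p"
    and "hardy_norm p (deriv (deriv (I_op g f)))
           \<le> 2 * (G * hardy_norm p (deriv (deriv f)) + B * hardy_norm p (deriv g))"
proof -
  let ?f2 = "deriv (deriv f)" and ?g1 = "deriv g"
  let ?\<psi> = "\<lambda>z. ?f2 z * g z + deriv f z * ?g1 z"
  have holf: "f holomorphic_on ball 0 1" and f2: "?f2 \<in> hardy_space p"
    and holg: "g holomorphic_on ball 0 1" and g1: "?g1 \<in> hardy_space p"
    using f g by (auto simp: S2_space_def S_space_def)
  have holf2: "?f2 holomorphic_on ball 0 1" and holg1: "?g1 holomorphic_on ball 0 1"
    using f2 g1 by (auto simp: hardy_space_def)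
  have holf1: "deriv f holomorphic_on ball 0 1"
    by (rule holomorphic_deriv[OF holf open_ball])
  have G0: "0 \<le> G" and B0: "0 \<le> B"
    by (simp_all add: G_def B_def hardy_norm_def)
  have "norm (?\<psi> z) powr p \<le> (2 * G) powr p * norm (?f2 z) powr p + (2 * B) powr p * norm (?g1 z) powr p"
    if z: "z \<in> ball 0 1" for z
  proof (rule norm_add_mult_powr_le)
    show "norm (g z) \<le> G"
      unfolding G_def by (rule S_space_norm_le[OF p g z])
    show "norm (deriv f z) \<le> B"
      unfolding B_def using holf1 f2 by (intro S_space_norm_le[OF p _ z]) (simp add: S_space_def)
  qed (use p in auto)
  then have mean_\<psi>: "hardy_mean p ?\<psi> r \<le> (2 * G) powr p * hardy_mean p ?f2 r + (2 * B) powr p * hardy_mean p ?g1 r"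
    if "r \<in> {0<..<1}" for r
    using p that by (intro hardy_mean_le_combination holf2 holg1 holomorphic_intros holf holg holf1) auto
  have mean_le: "hardy_mean p (deriv (deriv (I_op g f))) r
          \<le> (2 * (G * hardy_norm p ?f2 + B * hardy_norm p ?g1)) powr p"
    if r: "r \<in> {0<..<1}" for r
  proof -
    have "hardy_mean p (deriv (deriv (I_op g f))) r = hardy_mean p ?\<psi> r"
      using r by (intro hardy_mean_cong deriv_deriv_I_op[OF holf holg]) auto
    also have "\<dots> \<le> (2 * G) powr p * hardy_mean p ?f2 r + (2 * B) powr p * hardy_mean p ?g1 r"
      by (rule mean_\<psi>[OF r])
    also have "\<dots> \<le> (2 * G) powr p * hardy_norm p ?f2 powr p + (2 * B) powr p * hardy_norm p ?g1 powr p"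
      using p r f2 g1 by (intro add_mono mult_left_mono hardy_mean_le_hardy_norm_powr) auto
    also have "\<dots> \<le> (2 * G * hardy_norm p ?f2 + 2 * B * hardy_norm p ?g1) powr p"
      using p G0 B0 by (simp add: powr_mult[symmetric] powr_add_powr_le_powr_add hardy_norm_def)
    finally show ?thesis
      by (simp add: algebra_simps)
  qed
  have hol: "deriv (deriv (I_op g f)) holomorphic_on ball 0 1"
    by (intro holomorphic_deriv I_op_holomorphic_on holf holg open_ball)
  have "0 \<le> 2 * (G * hardy_norm p ?f2 + B * hardy_norm p ?g1)"
    using G0 B0 by (simp add: hardy_norm_def)
  from hardy_space_and_norm_le[OF hol _ this mean_le] p
  show "deriv (deriv (I_op g f)) \<in> hardy_space p"
    and "hardy_norm p (deriv (deriv (I_op g f)))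
           \<le> 2 * (G * hardy_norm p ?f2 + B * hardy_norm p ?g1)"
    by auto
qed

lemma I_op_bounded_S2_if_S_space:
  assumes p: "1 \<le> p" and g: "g \<in> S_space p"
  shows "I_op_bounded_S2 p g"
proof -
  define Ng where "Ng = hardy_norm p (deriv g)"
  define G where "G = norm (g 0) + 4 * pi * Ng"
  define C where "C = norm (g 0) + 2 * G + 2 * Ng + 8 * pi * Ng"
  have holg: "g holomorphic_on ball 0 1"
    using g by (simp add: S_space_def)
  have Ng0: "0 \<le> Ng" and G0: "0 \<le> G"
    by (simp_all add: Ng_def G_def hardy_norm_def)
  have "I_op g f \<in> S2_space p \<and> S2_norm p (I_op g f) \<le> C * S2_norm p f"
    if f: "f \<in> S2_space p" for f
  proof -
    define N2 where "N2 = hardy_norm p (deriv (deriv f))"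
    define B where "B = norm (deriv f 0) + 4 * pi * N2"
    have holf: "f holomorphic_on ball 0 1"
      using f by (simp add: S2_space_def)
    have N20: "0 \<le> N2"
      by (simp add: N2_def hardy_norm_def)
    note bound = hardy_norm_deriv_deriv_I_op_le[OF p g f, folded Ng_def N2_def, folded G_def B_def]
    have "I_op g f 0 = 0"
      by (simp add: I_op_def)
    moreover have "deriv (I_op g f) 0 = deriv f 0 * g 0"
      using I_op_has_field_derivative[OF holf holg, of 0] by (simp add: DERIV_imp_deriv)
    ultimately have "S2_norm p (I_op g f) \<le> norm (deriv f 0) * norm (g 0) + 2 * (G * N2 + B * Ng)"
      using bound(2) by (simp add: S2_norm_def norm_mult)
    also have "\<dots> = norm (deriv f 0) * (norm (g 0) + 2 * Ng) + N2 * (2 * G + 8 * pi * Ng)"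
      by (simp add: B_def algebra_simps)
    also have "\<dots> \<le> C * S2_norm p f"
      using Ng0 G0 N20
      by (simp add: C_def S2_norm_def N2_def algebra_simps add_increasing mult_right_mono)
    finally show ?thesis
      using holf holg bound(1) by (simp add: S2_space_def I_op_holomorphic_on)
  qed
  then show ?thesis
    unfolding I_op_bounded_S2_def by blast
qed

lemma S_space_if_I_op_bounded_S2:
  assumes p: "0 < p" and holg: "g holomorphic_on ball 0 1" and bounded: "I_op_bounded_S2 p g"
  shows "g \<in> S_space p"
proof -
  have "(\<lambda>z::complex. 0::complex) \<in> hardy_space p"
    using p by (intro hardy_space_and_norm_le(1)[of _ p 0]) (auto simp: hardy_mean_def)
  then have "(\<lambda>z. z) \<in> S2_space p"
    by (simp add: S2_space_def)
  then have "deriv (deriv (I_op g (\<lambda>z. z))) \<in> hardy_space p"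
    using bounded by (auto simp: I_op_bounded_S2_def S2_space_def)
  moreover have "deriv (deriv (I_op g (\<lambda>z. z))) z = deriv g z" if "z \<in> ball 0 1" for z
    using deriv_deriv_I_op[OF _ holg that] by simp
  ultimately have "deriv g \<in> hardy_space p"
    using hardy_space_cong by blast
  then show ?thesis
    using holg by (simp add: S_space_def)
qed

theorem theorem4p2:
  fixes p :: real and g :: "complex \<Rightarrow> complex"
  assumes "1 \<le> p" and "g holomorphic_on ball 0 1"
  shows "I_op_bounded_S2 p g \<longleftrightarrow> g \<in> S_space p"
  using assms S_space_if_I_op_bounded_S2[of p g] I_op_bounded_S2_if_S_space[of p g] by auto

end
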